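(* Let $F$ be a discrete time regulatory network on $[0,1]^d$ satisfying coordinatewise injectivity, let $(V,\mathcal A)$ be its underlying network, let $U\subset V$ be head-independent, and let $W:=V\setminus U$. Then $W$ is essential.
   Context: $V=\{1,\dots,d\}$; $K\in[0,1]^{d\times d}$ with $\sum_iK_{i,j}=1$ for each $j$; $s\in\{-1,0,1\}^{d\times d}$, $T\in[0,1]^{d\times d}$ with $s_{i,j}=0$ iff $K_{i,j}=0$ and $T_{i,j}=0$ iff $K_{i,j}=0$; $a\in[0,1]$; $H(x)=0$ for $x\le0$, $1$ otherwise; $F(x)_j=ax_j+(1-a)\sum_iK_{i,j}H(s_{i,j}(x_i-T_{i,j}))$. Underlying network: $\mathcal A=\{(i,j):K_{i,j}>0\}$. Coordinatewise injectivity: for each $j$, with $\mathcal F_j=\{x\mapsto ax+(1-a)\sum_i\epsilon_iK_{i,j}:\epsilon\in\{0,1\}^d\}$, distinct $f,f'\in\mathcal F_j$ have $f([0,1])\cap f'([0,1])=\emptyset$. Base partition: $\mathcal P_i$ is the set of nonempty level sets of $u\mapsto(H(s_{i,k}(u-T_{i,k})))_{k=1}^d$ on $[0,1]$, $\mathcal P=\{\prod_iI_i:I_i\in\mathcal P_i\}$; $\mathcal P^1=\mathcal P$, $\mathcal P^{t+1}=\{F^{-1}(\mathbf I)\cap\mathbf J\ne\emptyset:\mathbf I\in\mathcal P^t,\mathbf J\in\mathcal P\}$. $\mathcal Q^t=\{F^{t-1}(\mathbf I):\mathbf I\in\mathcal P^t\}$, $\mathcal Q_i^t=\{\Pi_i\mathbf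 J:\mathbf J\in\mathcal Q^t\}$. For $W'\subset V$, a $(W',t)$-specification is $\mathbf S=(S_i)_{i\in W'}$ with $S_i\in\mathcal Q_i^t$; $C(\mathbf S)=\{\mathbf J\in\mathcal Q^t:\Pi_i\mathbf J=S_i\ \forall i\in W'\}$ and $N(\mathbf S)=\#C(\mathbf S)$. $W$ is essential if there is $M\in\mathbb N$ with $N(\mathbf S)\le M$ for all $t\ge1$ and all $(W,t)$-specifications $\mathbf S$. $U$ is head-independent if (1) no arrow with tail in $U$ has head in $U$, and (2) distinct $i,i'\in U$ have $\{j:(i,j)\in\mathcal A\}\cap\{j:(i',j)\in\mathcal A\}=\emptyset$. *)

theory Defs
  imports Complex_Main "HOL-Library.FuncSet"
begin

text \<open>Vertices V = the finite type 'n (so d = CARD('n)); states are functions 'n => real.\<close>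

definition Hv :: "real \<Rightarrow> real" where
  "Hv x = (if x \<le> 0 then 0 else 1)"

definition cube :: "('n \<Rightarrow> real) set" where
  "cube = {x. \<forall>i. x i \<in> {0..1}}"

definition dtrn_map :: "real \<Rightarrow> ('n::finite \<Rightarrow> 'n \<Rightarrow> real) \<Rightarrow> ('n \<Rightarrow> 'n \<Rightarrow> int)
    \<Rightarrow> ('n \<Rightarrow> 'n \<Rightarrow> real) \<Rightarrow> ('n \<Rightarrow> real) \<Rightarrow> ('n \<Rightarrow> real)" where
  "dtrn_map a K s T x = (\<lambda>j. a * x j + (1 - a) * (\<Sum>i\<in>UNIV. K i j * Hv (of_int (s i j) * (x i - T i j))))"

definition is_dtrn :: "real \<Rightarrow> ('n::finite \<Rightarrow> 'n \<Rightarrow> real) \<Rightarrow> ('n \<Rightarrow> 'n \<Rightarrow> int)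
    \<Rightarrow> ('n \<Rightarrow> 'n \<Rightarrow> real) \<Rightarrow> bool" where
  "is_dtrn a K s T \<longleftrightarrow>
     a \<in> {0..1} \<and>
     (\<forall>i j. K i j \<in> {0..1}) \<and>
     (\<forall>j. (\<Sum>i\<in>UNIV. K i j) = 1) \<and>
     (\<forall>i j. s i j \<in> {-1, 0, 1}) \<and>
     (\<forall>i j. T i j \<in> {0..1}) \<and>
     (\<forall>i j. s i j = 0 \<longleftrightarrow> K i j = 0) \<and>
     (\<forall>i j. T i j = 0 \<longleftrightarrow> K i j = 0)"

definition arrows :: "('n \<Rightarrow> 'n \<Rightarrow> real) \<Rightarrow> ('n \<times> 'n) set" where
  "arrows K = {(i, j). K i j > 0}"

definition coord_map :: "real \<Rightarrow> ('n::finite \<Rightarrow> 'n \<Rightarrow> real) \<Rightarrow> 'n \<Rightarrow> ('n \<Rightarrow> bool) \<Rightarrow> real \<Rightarrow> real" where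
  "coord_map a K j eps = (\<lambda>x. a * x + (1 - a) * (\<Sum>i\<in>UNIV. (if eps i then 1 else 0) * K i j))"

definition coordinatewise_injective :: "real \<Rightarrow> ('n::finite \<Rightarrow> 'n \<Rightarrow> real) \<Rightarrow> bool" where
  "coordinatewise_injective a K \<longleftrightarrow>
     (\<forall>j eps eps'. coord_map a K j eps \<noteq> coord_map a K j eps' \<longrightarrow>
        coord_map a K j eps ` {0..1} \<inter> coord_map a K j eps' ` {0..1} = {})"

definition sig :: "('n \<Rightarrow> 'n \<Rightarrow> int) \<Rightarrow> ('n \<Rightarrow> 'n \<Rightarrow> real) \<Rightarrow> 'n \<Rightarrow> real \<Rightarrow> ('n \<Rightarrow> real)" where
  "sig s T i u = (\<lambda>k. Hv (of_int (s i k) * (u - T i k)))"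

definition base_part_i :: "('n \<Rightarrow> 'n \<Rightarrow> int) \<Rightarrow> ('n \<Rightarrow> 'n \<Rightarrow> real) \<Rightarrow> 'n \<Rightarrow> real set set" where
  "base_part_i s T i = {{u \<in> {0..1}. sig s T i u = sig s T i v} | v. v \<in> {0..1}}"

definition base_part :: "('n \<Rightarrow> 'n \<Rightarrow> int) \<Rightarrow> ('n \<Rightarrow> 'n \<Rightarrow> real) \<Rightarrow> ('n \<Rightarrow> real) set set" where
  "base_part s T = {Pi UNIV I | I. \<forall>i. I i \<in> base_part_i s T i}"

text \<open>part a K s T t = P^t for t >= 1 (P^0 is unused and set to {}).\<close>
fun part :: "real \<Rightarrow> ('n::finite \<Rightarrow> 'n \<Rightarrow> real) \<Rightarrow> ('n \<Rightarrow> 'n \<Rightarrow> int)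
    \<Rightarrow> ('n \<Rightarrow> 'n \<Rightarrow> real) \<Rightarrow> nat \<Rightarrow> ('n \<Rightarrow> real) set set" where
  "part a K s T 0 = {}"
| "part a K s T (Suc 0) = base_part s T"
| "part a K s T (Suc (Suc t)) =
     {C. \<exists>I\<in>part a K s T (Suc t). \<exists>J\<in>base_part s T.
          C = (dtrn_map a K s T -` I) \<inter> J \<and> C \<noteq> {}}"

definition Qpart :: "real \<Rightarrow> ('n::finite \<Rightarrow> 'n \<Rightarrow> real) \<Rightarrow> ('n \<Rightarrow> 'n \<Rightarrow> int)
    \<Rightarrow> ('n \<Rightarrow> 'n \<Rightarrow> real) \<Rightarrow> nat \<Rightarrow> ('n \<Rightarrow> real) set set" where
  "Qpart a K s T t = (\<lambda>I. (dtrn_map a K s T ^^ (t - 1)) ` I) ` part a K s T t"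

definition proj :: "'n \<Rightarrow> ('n \<Rightarrow> real) set \<Rightarrow> real set" where
  "proj i J = (\<lambda>x. x i) ` J"

definition Qpart_i :: "real \<Rightarrow> ('n::finite \<Rightarrow> 'n \<Rightarrow> real) \<Rightarrow> ('n \<Rightarrow> 'n \<Rightarrow> int)
    \<Rightarrow> ('n \<Rightarrow> 'n \<Rightarrow> real) \<Rightarrow> nat \<Rightarrow> 'n \<Rightarrow> real set set" where
  "Qpart_i a K s T t i = proj i ` Qpart a K s T t"

definition is_spec :: "real \<Rightarrow> ('n::finite \<Rightarrow> 'n \<Rightarrow> real) \<Rightarrow> ('n \<Rightarrow> 'n \<Rightarrow> int)
    \<Rightarrow> ('n \<Rightarrow> 'n \<Rightarrow> real) \<Rightarrow> 'n set \<Rightarrow> nat \<Rightarrow> ('n \<Rightarrow> real set) \<Rightarrow> bool" where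
  "is_spec a K s T W t S \<longleftrightarrow> (\<forall>i\<in>W. S i \<in> Qpart_i a K s T t i)"

definition spec_cells :: "real \<Rightarrow> ('n::finite \<Rightarrow> 'n \<Rightarrow> real) \<Rightarrow> ('n \<Rightarrow> 'n \<Rightarrow> int)
    \<Rightarrow> ('n \<Rightarrow> 'n \<Rightarrow> real) \<Rightarrow> 'n set \<Rightarrow> nat \<Rightarrow> ('n \<Rightarrow> real set) \<Rightarrow> ('n \<Rightarrow> real) set set" where
  "spec_cells a K s T W t S = {J \<in> Qpart a K s T t. \<forall>i\<in>W. proj i J = S i}"

definition essential :: "real \<Rightarrow> ('n::finite \<Rightarrow> 'n \<Rightarrow> real) \<Rightarrow> ('n \<Rightarrow> 'n \<Rightarrow> int)
    \<Rightarrow> ('n \<Rightarrow> 'n \<Rightarrow> real) \<Rightarrow> 'n set \<Rightarrow> bool" where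
  "essential a K s T W \<longleftrightarrow>
     (\<exists>M::nat. \<forall>t\<ge>1. \<forall>S. is_spec a K s T W t S \<longrightarrow>
        finite (spec_cells a K s T W t S) \<and> card (spec_cells a K s T W t S) \<le> M)"

definition head_independent :: "('n \<Rightarrow> 'n \<Rightarrow> real) \<Rightarrow> 'n set \<Rightarrow> bool" where
  "head_independent K U \<longleftrightarrow>
     (\<forall>i\<in>U. \<forall>j. (i, j) \<in> arrows K \<longrightarrow> j \<notin> U) \<and>
     (\<forall>i\<in>U. \<forall>i'\<in>U. i \<noteq> i' \<longrightarrow> {j. (i, j) \<in> arrows K} \<inter> {j. (i', j) \<in> arrows K} = {})"

end

theory Submission
  imports Defs
begin

text \<open>A cell of \<open>\<Q>\<^sup>t\<close> is the image under \<open>F\<^sup>t\<^sup>-\<^sup>1\<close> of the set of points sharing their first \<open>t\<close>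
switch patterns (the matrices \<open>H(s\<^sub>i\<^sub>,\<^sub>j(x\<^sub>i - T\<^sub>i\<^sub>,\<^sub>j))\<close>). On such a set \<open>F\<close> acts coordinatewise, so
the set and its image are closed under exchanging coordinates between two of their points: every
cell is the product of its projections. Hence, given a point \<open>y\<^sub>0\<close> in some cell of a
\<open>(W,t)\<close>-specification, every cell of that specification contains a point agreeing with \<open>y\<^sub>0\<close>
on \<open>W\<close>, and the cell is determined by the switch pattern of that point. Indeed, for \<open>0 < a < 1\<close>,
coordinatewise injectivity recovers \<open>z\<^sub>j\<close> and the input \<open>\<Sum>\<^sub>i K\<^sub>i\<^sub>,\<^sub>j H(\<dots>)\<close> from \<open>F(z)\<^sub>j\<close> for
\<open>j \<in> W\<close>, and head-independence then recovers the whole switch pattern of \<open>z\<close>, since every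
arrow leaving \<open>U\<close> is the only arrow from \<open>U\<close> into its head, which lies in \<open>W\<close>; so the itinerary
can be traced back from its last point. For \<open>a = 1\<close> the map is the identity, and for \<open>a = 0\<close>
every cell with \<open>t \<ge> 2\<close> is a single point determined by a switch pattern. In all cases
\<open>N(S)\<close> is at most the number of 0-1 matrices.\<close>

definition switch_pattern :: "('n \<Rightarrow> 'n \<Rightarrow> int) \<Rightarrow> ('n \<Rightarrow> 'n \<Rightarrow> real) \<Rightarrow> ('n \<Rightarrow> real) \<Rightarrow> 'n \<Rightarrow> 'n \<Rightarrow> real"
  where "switch_pattern s T x = (\<lambda>i. sig s T i (x i))"

definition itinerary :: "real \<Rightarrow> ('n::finite \<Rightarrow> 'n \<Rightarrow> real) \<Rightarrow> ('n \<Rightarrow> 'n \<Rightarrow> int)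
    \<Rightarrow> ('n \<Rightarrow> 'n \<Rightarrow> real) \<Rightarrow> ('n \<Rightarrow> real) \<Rightarrow> nat \<Rightarrow> 'n \<Rightarrow> 'n \<Rightarrow> real"
  where "itinerary a K s T x k = switch_pattern s T ((dtrn_map a K s T ^^ k) x)"

definition itinerary_cell :: "real \<Rightarrow> ('n::finite \<Rightarrow> 'n \<Rightarrow> real) \<Rightarrow> ('n \<Rightarrow> 'n \<Rightarrow> int)
    \<Rightarrow> ('n \<Rightarrow> 'n \<Rightarrow> real) \<Rightarrow> nat \<Rightarrow> ('n \<Rightarrow> real) \<Rightarrow> ('n \<Rightarrow> real) set"
  where "itinerary_cell a K s T t x =
    {x' \<in> cube. \<forall>k<t. itinerary a K s T x' k = itinerary a K s T x k}"

definition regulation :: "('n::finite \<Rightarrow> 'n \<Rightarrow> real) \<Rightarrow> ('n \<Rightarrow> 'n \<Rightarrow> real) \<Rightarrow> 'n \<Rightarrow> real"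
  where "regulation K \<sigma> = (\<lambda>j. \<Sum>i\<in>UNIV. K i j * \<sigma> i j)"

definition merge_on :: "'n set \<Rightarrow> ('n \<Rightarrow> 'b) \<Rightarrow> ('n \<Rightarrow> 'b) \<Rightarrow> 'n \<Rightarrow> 'b"
  where "merge_on A x x' = (\<lambda>i. if i \<in> A then x i else x' i)"

definition zero_one_matrices :: "('n \<Rightarrow> 'n \<Rightarrow> real) set"
  where "zero_one_matrices = {\<sigma>. \<forall>i j. \<sigma> i j \<in> {0, 1}}"

lemma finite_zero_one_matrices: "finite (zero_one_matrices :: ('n::finite \<Rightarrow> 'n \<Rightarrow> real) set)"
proof -
  let ?of_bool = "\<lambda>f::'n \<times> 'n \<Rightarrow> bool. \<lambda>i j. if f (i, j) then 1 else (0::real)"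
  have "\<sigma> = ?of_bool (\<lambda>(i, j). \<sigma> i j = 1)" if "\<sigma> \<in> zero_one_matrices" for \<sigma>
    using that by (auto simp: zero_one_matrices_def fun_eq_iff)
  then have "zero_one_matrices \<subseteq> range ?of_bool"
    by blast
  then show ?thesis
    by (rule finite_subset) simp
qed

lemma switch_pattern_in_zero_one_matrices: "switch_pattern s T x \<in> zero_one_matrices"
  by (simp add: zero_one_matrices_def switch_pattern_def sig_def Hv_def)

lemma dtrn_map_eq_regulation:
  "dtrn_map a K s T x = (\<lambda>j. a * x j + (1 - a) * regulation K (switch_pattern s T x) j)"
  by (simp add: dtrn_map_def regulation_def switch_pattern_def sig_def)

lemma dtrn_map_one: "dtrn_map 1 K s T = id"
  by (simp add: dtrn_map_eq_regulation fun_eq_iff)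

lemma dtrn_map_in_cube:
  assumes "is_dtrn a K s T" "x \<in> cube"
  shows "dtrn_map a K s T x \<in> cube"
proof -
  have a: "0 \<le> a" "a \<le> 1" and K: "\<And>i j. 0 \<le> K i j" "\<And>j. (\<Sum>i\<in>UNIV. K i j) = 1"
    using assms(1) by (auto simp: is_dtrn_def)
  have "dtrn_map a K s T x j \<in> {0..1}" for j
  proof -
    let ?G = "\<Sum>i\<in>UNIV. K i j * Hv (of_int (s i j) * (x i - T i j))"
    have x: "0 \<le> x j" "x j \<le> 1"
      using assms(2) by (auto simp: cube_def)
    have G: "0 \<le> ?G" "?G \<le> (\<Sum>i\<in>UNIV. K i j)"
      by (intro sum_nonneg sum_mono; simp add: K Hv_def)+
    have "0 \<le> a * x j + (1 - a) * ?G"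
      using a x G by simp
    moreover have "a * x j + (1 - a) * ?G \<le> a * 1 + (1 - a) * 1"
      using a x G K(2) by (intro add_mono mult_left_mono) auto
    ultimately show ?thesis
      by (simp add: dtrn_map_def)
  qed
  then show ?thesis
    by (simp add: cube_def)
qed

lemma itinerary_0: "itinerary a K s T x 0 = switch_pattern s T x"
  by (simp add: itinerary_def)

lemma itinerary_Suc: "itinerary a K s T x (Suc k) = itinerary a K s T (dtrn_map a K s T x) k"
  by (simp add: itinerary_def funpow_Suc_right del: funpow.simps)

lemma itinerary_cell_self: "x \<in> cube \<Longrightarrow> x \<in> itinerary_cell a K s T t x"
  by (simp add: itinerary_cell_def)

lemma itinerary_cell_eq:
  "z \<in> itinerary_cell a K s T t x \<Longrightarrow> itinerary_cell a K s T t z = itinerary_cell a K s T t x"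
  by (simp add: itinerary_cell_def)

lemma base_part_eq_cell:
  assumes "C \<in> base_part s T"
  shows "C \<noteq> {} \<and> (\<forall>x\<in>C. C = {x' \<in> cube. switch_pattern s T x' = switch_pattern s T x})"
proof -
  obtain I where C: "C = Pi UNIV I" and I: "\<And>i. I i \<in> base_part_i s T i"
    using assms by (auto simp: base_part_def)
  have "\<forall>i. \<exists>v. v \<in> {0..1} \<and> I i = {u \<in> {0..1}. sig s T i u = sig s T i v}"
    using I by (auto simp: base_part_i_def)
  then obtain v where v: "\<And>i. v i \<in> {0..1}" "\<And>i. I i = {u \<in> {0..1}. sig s T i u = sig s T i (v i)}"
    by metis
  have C_eq: "C = {x' \<in> cube. switch_pattern s T x' = switch_pattern s T v}"
    unfolding C Pi_def using v(2) by (auto simp: cube_def switch_pattern_def dest: fun_cong)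
  moreover have "v \<in> C"
    using v by (simp add: C_eq cube_def)
  ultimately show ?thesis
    by auto
qed

lemma part_eq_itinerary_cell:
  assumes "is_dtrn a K s T" "C \<in> part a K s T (Suc t)"
  shows "C \<noteq> {} \<and> (\<forall>x\<in>C. C = itinerary_cell a K s T (Suc t) x)"
  using assms(2)
proof (induction t arbitrary: C)
  case 0
  then show ?case
    using base_part_eq_cell[of C s T] by (simp add: itinerary_cell_def itinerary_0)
next
  case (Suc t)
  let ?F = "dtrn_map a K s T"
  obtain I J where I: "I \<in> part a K s T (Suc t)" and J: "J \<in> base_part s T"
    and C: "C = ?F -` I \<inter> J" and "C \<noteq> {}"
    using Suc.prems by auto
  have "C = itinerary_cell a K s T (Suc (Suc t)) x" if "x \<in> C" for x
  proof -
    have I_eq: "I = itinerary_cell a K s T (Suc t) (?F x)"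
      and J_eq: "J = {x' \<in> cube. switch_pattern s T x' = switch_pattern s T x}"
      using Suc.IH[OF I] base_part_eq_cell[OF J] \<open>x \<in> C\<close> C by blast+
    have "x' \<in> C \<longleftrightarrow> x' \<in> cube \<and> (\<forall>k<Suc (Suc t). itinerary a K s T x' k = itinerary a K s T x k)"
      for x'
    proof -
      have "x' \<in> C \<longleftrightarrow> x' \<in> cube \<and> switch_pattern s T x' = switch_pattern s T x
          \<and> (\<forall>k<Suc t. itinerary a K s T (?F x') k = itinerary a K s T (?F x) k)"
        unfolding C I_eq J_eq itinerary_cell_def using dtrn_map_in_cube[OF assms(1)] by blast
      then show ?thesis
        unfolding All_less_Suc2[where n="Suc t"] by (simp add: itinerary_0 itinerary_Suc)
    qed
    then show ?thesis
      unfolding itinerary_cell_def by blast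
  qed
  with \<open>C \<noteq> {}\<close> show ?case
    by blast
qed

lemma Qpart_eq_image_itinerary_cell:
  assumes "is_dtrn a K s T" "J \<in> Qpart a K s T (Suc t)"
  obtains x where "x \<in> cube" "J = (dtrn_map a K s T ^^ t) ` itinerary_cell a K s T (Suc t) x"
proof -
  obtain C where C: "C \<in> part a K s T (Suc t)" and J: "J = (dtrn_map a K s T ^^ t) ` C"
    using assms(2) by (auto simp: Qpart_def)
  then obtain x where "x \<in> C" "C = itinerary_cell a K s T (Suc t) x"
    using part_eq_itinerary_cell[OF assms(1) C] by blast
  then show thesis
    using that J by (auto simp: itinerary_cell_def)
qed

lemma Qpart_nonempty:
  assumes "is_dtrn a K s T" "J \<in> Qpart a K s T (Suc t)"
  shows "J \<noteq> {}"
proof -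
  obtain x where "x \<in> cube" "J = (dtrn_map a K s T ^^ t) ` itinerary_cell a K s T (Suc t) x"
    using Qpart_eq_image_itinerary_cell[OF assms] .
  then show ?thesis
    using itinerary_cell_self by blast
qed

lemma switch_pattern_merge_on:
  "switch_pattern s T x = switch_pattern s T x' \<Longrightarrow>
    switch_pattern s T (merge_on A x x') = switch_pattern s T x"
  by (auto simp: switch_pattern_def merge_on_def fun_eq_iff dest: fun_cong)

lemma dtrn_map_merge_on:
  "switch_pattern s T x = switch_pattern s T x' \<Longrightarrow>
    dtrn_map a K s T (merge_on A x x') = merge_on A (dtrn_map a K s T x) (dtrn_map a K s T x')"
  by (simp add: dtrn_map_eq_regulation switch_pattern_merge_on) (auto simp: merge_on_def fun_eq_iff)

lemma funpow_dtrn_map_merge_on: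
  "(\<forall>k<n. itinerary a K s T x k = itinerary a K s T x' k) \<Longrightarrow>
    (dtrn_map a K s T ^^ n) (merge_on A x x') =
      merge_on A ((dtrn_map a K s T ^^ n) x) ((dtrn_map a K s T ^^ n) x')"
proof (induction n arbitrary: x x')
  case 0
  then show ?case
    by simp
next
  case (Suc n)
  then have "switch_pattern s T x = switch_pattern s T x'"
    and "\<forall>k<n. itinerary a K s T (dtrn_map a K s T x) k = itinerary a K s T (dtrn_map a K s T x') k"
    unfolding All_less_Suc2 by (simp_all add: itinerary_0 itinerary_Suc)
  then show ?case
    using Suc.IH by (simp add: funpow_Suc_right dtrn_map_merge_on del: funpow.simps)
qed

lemma merge_on_in_cube: "x \<in> cube \<Longrightarrow> x' \<in> cube \<Longrightarrow> merge_on A x x' \<in> cube"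
  by (auto simp: cube_def merge_on_def)

lemma merge_on_in_itinerary_cell:
  assumes "z \<in> itinerary_cell a K s T t x" "z' \<in> itinerary_cell a K s T t x"
  shows "merge_on A z z' \<in> itinerary_cell a K s T t x"
proof -
  have same: "\<forall>k<t. itinerary a K s T z k = itinerary a K s T z' k"
    and "z \<in> cube" "z' \<in> cube"
    using assms by (auto simp: itinerary_cell_def)
  have "itinerary a K s T (merge_on A z z') k = itinerary a K s T z k" if "k < t" for k
  proof -
    have "(dtrn_map a K s T ^^ k) (merge_on A z z') =
        merge_on A ((dtrn_map a K s T ^^ k) z) ((dtrn_map a K s T ^^ k) z')"
      using same \<open>k < t\<close> by (intro funpow_dtrn_map_merge_on) simp
    then show ?thesis
      using same \<open>k < t\<close> by (simp add: itinerary_def switch_pattern_merge_on)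
  qed
  then show ?thesis
    using assms merge_on_in_cube[OF \<open>z \<in> cube\<close> \<open>z' \<in> cube\<close>] by (simp add: itinerary_cell_def)
qed

lemma Qpart_merge_on_closed:
  assumes "is_dtrn a K s T" "J \<in> Qpart a K s T (Suc t)" "y \<in> J" "y' \<in> J"
  shows "merge_on A y y' \<in> J"
proof -
  let ?F = "dtrn_map a K s T"
  obtain x where "x \<in> cube" and J: "J = (?F ^^ t) ` itinerary_cell a K s T (Suc t) x"
    using Qpart_eq_image_itinerary_cell[OF assms(1,2)] .
  then obtain z z' where z: "z \<in> itinerary_cell a K s T (Suc t) x" "z' \<in> itinerary_cell a K s T (Suc t) x"
    and y: "y = (?F ^^ t) z" "y' = (?F ^^ t) z'"
    using assms(3,4) by auto
  then have "merge_on A y y' = (?F ^^ t) (merge_on A z z')"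
    by (simp add: funpow_dtrn_map_merge_on itinerary_cell_def)
  then show ?thesis
    using merge_on_in_itinerary_cell[OF z] J by simp
qed

lemma merge_on_closed_mem_product:
  fixes J :: "('n::finite \<Rightarrow> 'b) set"
  assumes "J \<noteq> {}" and merge: "\<And>y y' A. y \<in> J \<Longrightarrow> y' \<in> J \<Longrightarrow> merge_on A y y' \<in> J"
    and f: "\<And>i. f i \<in> (\<lambda>y. y i) ` J"
  shows "f \<in> J"
proof -
  have "\<exists>z\<in>J. \<forall>i\<in>B. z i = f i" if "finite B" for B
    using that
  proof (induction B rule: finite_induct)
    case empty
    then show ?case
      using \<open>J \<noteq> {}\<close> by auto
  next
    case (insert b B)
    obtain z where z: "z \<in> J" "\<forall>i\<in>B. z i = f i"
      using insert.IH by blast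
    obtain z' where z': "z' \<in> J" "z' b = f b"
      using f[of b] by auto
    have "merge_on {b} z' z \<in> J"
      using merge[OF z'(1) z(1)] .
    moreover have "\<forall>i\<in>insert b B. merge_on {b} z' z i = f i"
      using z(2) z'(2) by (simp add: merge_on_def)
    ultimately show ?case
      by blast
  qed
  from this[of UNIV] obtain z where "z \<in> J" "\<forall>i. z i = f i"
    by auto
  moreover from this(2) have "z = f"
    by (simp add: fun_eq_iff)
  ultimately show ?thesis
    by simp
qed

lemma spec_cells_meet_fibre:
  assumes "is_dtrn a K s T"
    and J: "J \<in> spec_cells a K s T W (Suc t) S" and J0: "J0 \<in> spec_cells a K s T W (Suc t) S"
    and "y0 \<in> J0"
  shows "\<exists>y\<in>J. \<forall>w\<in>W. y w = y0 w"
proof -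
  have JQ: "J \<in> Qpart a K s T (Suc t)" and proj_eq: "\<forall>w\<in>W. proj w J = proj w J0"
    using J J0 by (auto simp: spec_cells_def)
  obtain z where "z \<in> J"
    using Qpart_nonempty[OF assms(1) JQ] by blast
  have "merge_on W y0 z i \<in> (\<lambda>y. y i) ` J" for i
    using proj_eq \<open>y0 \<in> J0\<close> \<open>z \<in> J\<close> by (cases "i \<in> W") (auto simp: merge_on_def proj_def)
  then have "merge_on W y0 z \<in> J"
    using merge_on_closed_mem_product Qpart_nonempty[OF assms(1) JQ]
      Qpart_merge_on_closed[OF assms(1) JQ] by blast
  moreover have "\<forall>w\<in>W. merge_on W y0 z w = y0 w"
    by (simp add: merge_on_def)
  ultimately show ?thesis
    by blast
qed

lemma regulation_switch_pattern:
  "regulation K (switch_pattern s T y) j =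
    (\<Sum>i\<in>UNIV. (if switch_pattern s T y i j = 1 then 1 else 0) * K i j)"
  unfolding regulation_def by (intro sum.cong) (auto simp: switch_pattern_def sig_def Hv_def)

lemma coordinatewise_injective_cancel:
  assumes "coordinatewise_injective a K" "0 < a" "a < 1"
    and "z j \<in> {0..1}" "z' j \<in> {0..1}"
    and "dtrn_map a K s T z j = dtrn_map a K s T z' j"
  shows "z j = z' j \<and> regulation K (switch_pattern s T z) j = regulation K (switch_pattern s T z') j"
proof -
  define \<epsilon> where "\<epsilon> y = (\<lambda>i. switch_pattern s T y i j = 1)" for y :: "'a \<Rightarrow> real"
  have F_eq: "dtrn_map a K s T y j = coord_map a K j (\<epsilon> y) (y j)" for y
    by (simp add: dtrn_map_eq_regulation regulation_switch_pattern coord_map_def \<epsilon>_def)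
  have "coord_map a K j (\<epsilon> z) ` {0..1} \<inter> coord_map a K j (\<epsilon> z') ` {0..1} \<noteq> {}"
    using assms(4-6) unfolding F_eq by blast
  then have "coord_map a K j (\<epsilon> z) 0 = coord_map a K j (\<epsilon> z') 0"
    using assms(1) unfolding coordinatewise_injective_def by metis
  then have "(1 - a) * regulation K (switch_pattern s T z) j = (1 - a) * regulation K (switch_pattern s T z') j"
    by (simp add: coord_map_def regulation_switch_pattern \<epsilon>_def)
  then have reg: "regulation K (switch_pattern s T z) j = regulation K (switch_pattern s T z') j"
    using assms(3) by simp
  then have "a * z j = a * z' j"
    using assms(6) by (simp add: dtrn_map_eq_regulation)
  with reg show ?thesis
    using assms(2) by simp
qed

lemma head_independent_column:
  assumes "is_dtrn a K s T" "head_independent K U" "u \<in> U" "K u j \<noteq> 0"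
  shows "j \<notin> U \<and> (\<forall>i\<in>U. i \<noteq> u \<longrightarrow> K i j = 0)"
proof -
  have K_nonneg: "\<And>i. 0 \<le> K i j"
    using assms(1) by (simp add: is_dtrn_def)
  then have arrow: "(u, j) \<in> arrows K"
    using assms(4) by (simp add: arrows_def order_le_neq_trans)
  then have "j \<notin> U"
    using assms(2,3) unfolding head_independent_def by blast
  moreover have "K i j = 0" if "i \<in> U" "i \<noteq> u" for i
  proof -
    have "{j. (u, j) \<in> arrows K} \<inter> {j. (i, j) \<in> arrows K} = {}"
      using assms(2,3) that unfolding head_independent_def by blast
    with arrow have "\<not> 0 < K i j"
      by (auto simp: arrows_def)
    with K_nonneg[of i] show ?thesis
      by simp
  qed
  ultimately show ?thesis
    by blast
qed

lemma head_independent_step: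
  assumes d: "is_dtrn a K s T" and "coordinatewise_injective a K" "0 < a" "a < 1"
    and hi: "head_independent K U" and "z \<in> cube" "z' \<in> cube"
    and F_eq: "\<forall>w\<in>UNIV - U. dtrn_map a K s T z w = dtrn_map a K s T z' w"
  shows "(\<forall>w\<in>UNIV - U. z w = z' w) \<and> switch_pattern s T z = switch_pattern s T z'"
proof -
  let ?\<sigma> = "switch_pattern s T z" and ?\<sigma>' = "switch_pattern s T z'"
  have cancel: "z w = z' w \<and> regulation K ?\<sigma> w = regulation K ?\<sigma>' w" if "w \<notin> U" for w
  proof -
    have "z w \<in> {0..1}" "z' w \<in> {0..1}"
      using assms(6,7) by (simp_all add: cube_def)
    then show ?thesis
      using coordinatewise_injective_cancel[OF assms(2-4)] F_eq that by blast
  qed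
  then have rows_W: "?\<sigma> i = ?\<sigma>' i" if "i \<notin> U" for i
    using that by (simp add: switch_pattern_def)
  have "?\<sigma> u j = ?\<sigma>' u j" if "u \<in> U" for u j
  proof (cases "K u j = 0")
    case True
    with d have "s u j = 0"
      by (simp add: is_dtrn_def)
    then show ?thesis
      by (simp add: switch_pattern_def sig_def Hv_def)
  next
    case False
    \<comment> \<open>\<open>u\<close> is the only vertex of \<open>U\<close> feeding \<open>j \<notin> U\<close>, so the input to \<open>j\<close> isolates \<open>K\<^sub>u\<^sub>,\<^sub>j \<sigma>\<^sub>u\<^sub>,\<^sub>j\<close>\<close>
    note column = head_independent_column[OF d hi \<open>u \<in> U\<close> False]
    have others: "K i j * ?\<sigma> i j = K i j * ?\<sigma>' i j" if "i \<noteq> u" for i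
      using column rows_W that by (cases "i \<in> U") simp_all
    have "K u j * ?\<sigma> u j + (\<Sum>i\<in>UNIV - {u}. K i j * ?\<sigma> i j)
        = K u j * ?\<sigma>' u j + (\<Sum>i\<in>UNIV - {u}. K i j * ?\<sigma>' i j)"
      using cancel[of j] column unfolding regulation_def by (simp add: sum.remove[of UNIV u])
    moreover have "(\<Sum>i\<in>UNIV - {u}. K i j * ?\<sigma> i j) = (\<Sum>i\<in>UNIV - {u}. K i j * ?\<sigma>' i j)"
      using others by (intro sum.cong) auto
    ultimately show ?thesis
      using False by simp
  qed
  with rows_W cancel show ?thesis
    by (auto simp: fun_eq_iff)
qed

lemma itinerary_backward:
  assumes "is_dtrn a K s T" "coordinatewise_injective a K" "0 < a" "a < 1" "head_independent K U"
  shows "x \<in> cube \<Longrightarrow> x' \<in> cube \<Longrightarrow>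
    \<forall>w\<in>UNIV - U. (dtrn_map a K s T ^^ n) x w = (dtrn_map a K s T ^^ n) x' w \<Longrightarrow>
    itinerary a K s T x n = itinerary a K s T x' n \<Longrightarrow>
    (\<forall>w\<in>UNIV - U. x w = x' w) \<and> (\<forall>k<Suc n. itinerary a K s T x k = itinerary a K s T x' k)"
proof (induction n arbitrary: x x')
  case 0
  then show ?case
    by simp
next
  case (Suc n)
  let ?F = "dtrn_map a K s T"
  have "\<forall>w\<in>UNIV - U. (?F ^^ n) (?F x) w = (?F ^^ n) (?F x') w"
    using Suc.prems(3) by (simp add: funpow_Suc_right del: funpow.simps)
  moreover have "itinerary a K s T (?F x) n = itinerary a K s T (?F x') n"
    using Suc.prems(4) by (simp add: itinerary_Suc)
  ultimately have IH: "(\<forall>w\<in>UNIV - U. ?F x w = ?F x' w) \<and>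
      (\<forall>k<Suc n. itinerary a K s T (?F x) k = itinerary a K s T (?F x') k)"
    by (intro Suc.IH dtrn_map_in_cube[OF assms(1)] Suc.prems(1,2))
  then have "(\<forall>w\<in>UNIV - U. x w = x' w) \<and> switch_pattern s T x = switch_pattern s T x'"
    using head_independent_step[OF assms(1-5) Suc.prems(1,2)] by blast
  moreover have "\<forall>k<Suc n. itinerary a K s T x (Suc k) = itinerary a K s T x' (Suc k)"
    using IH by (simp add: itinerary_Suc)
  ultimately show ?case
    unfolding All_less_Suc2[where n="Suc n"] itinerary_0 by blast
qed

lemma itinerary_determined_by_image:
  assumes "is_dtrn a K s T" "coordinatewise_injective a K" "head_independent K U" "a \<noteq> 0"
    and "x \<in> cube" "x' \<in> cube"
    and "\<forall>w\<in>UNIV - U. (dtrn_map a K s T ^^ t) x w = (dtrn_map a K s T ^^ t) x' w"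
    and "itinerary a K s T x t = itinerary a K s T x' t"
  shows "\<forall>k<Suc t. itinerary a K s T x k = itinerary a K s T x' k"
proof (cases "a = 1")
  case True
  then show ?thesis
    using assms(8) by (simp add: itinerary_def dtrn_map_one)
next
  case False
  then have "0 < a" "a < 1"
    using assms(1,4) by (auto simp: is_dtrn_def)
  then show ?thesis
    using itinerary_backward[OF assms(1,2) _ _ assms(3,5-8)] by blast
qed

lemma Qpart_cell_through:
  assumes "is_dtrn a K s T" "J \<in> Qpart a K s T (Suc t)" "y \<in> J"
  obtains z where "z \<in> cube" "y = (dtrn_map a K s T ^^ t) z"
    "J = (dtrn_map a K s T ^^ t) ` itinerary_cell a K s T (Suc t) z"
proof -
  obtain x where "J = (dtrn_map a K s T ^^ t) ` itinerary_cell a K s T (Suc t) x"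
    using Qpart_eq_image_itinerary_cell[OF assms(1,2)] .
  moreover obtain z where "z \<in> itinerary_cell a K s T (Suc t) x" "y = (dtrn_map a K s T ^^ t) z"
    using assms(3) calculation by blast
  moreover have "z \<in> cube"
    using calculation(2) by (simp add: itinerary_cell_def)
  ultimately show thesis
    using that itinerary_cell_eq by metis
qed

lemma Qpart_eq_if_agree:
  assumes d: "is_dtrn a K s T" and ci: "coordinatewise_injective a K" and hi: "head_independent K U"
    and "a \<noteq> 0 \<or> t = 0"
    and "J \<in> Qpart a K s T (Suc t)" "J' \<in> Qpart a K s T (Suc t)" "y \<in> J" "y' \<in> J'"
    and agree: "\<forall>w\<in>UNIV - U. y w = y' w" "switch_pattern s T y = switch_pattern s T y'"
  shows "J = J'"
proof -
  let ?F = "dtrn_map a K s T" and ?cell = "itinerary_cell a K s T (Suc t)"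
  obtain z where z: "z \<in> cube" "y = (?F ^^ t) z" "J = (?F ^^ t) ` ?cell z"
    using Qpart_cell_through[OF d assms(5,7)] .
  obtain z' where z': "z' \<in> cube" "y' = (?F ^^ t) z'" "J' = (?F ^^ t) ` ?cell z'"
    using Qpart_cell_through[OF d assms(6,8)] .
  have "\<forall>k<Suc t. itinerary a K s T z k = itinerary a K s T z' k"
  proof (cases "t = 0")
    case True
    then show ?thesis
      using z(2) z'(2) agree(2) by (simp add: itinerary_0)
  next
    case False
    with assms(4) have "a \<noteq> 0"
      by simp
    moreover have "itinerary a K s T z t = itinerary a K s T z' t"
      using z(2) z'(2) agree(2) by (simp add: itinerary_def)
    ultimately show ?thesis
      using itinerary_determined_by_image[OF d ci hi _ z(1) z'(1)] z(2) z'(2) agree(1) by simp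
  qed
  then have "?cell z = ?cell z'"
    by (simp add: itinerary_cell_def)
  then show ?thesis
    using z(3) z'(3) by simp
qed

lemma Qpart_rate_zero:
  assumes "is_dtrn 0 K s T" "J \<in> Qpart 0 K s T (Suc (Suc t))"
  shows "J \<in> (\<lambda>\<sigma>. {regulation K \<sigma>}) ` zero_one_matrices"
proof -
  let ?F = "dtrn_map 0 K s T"
  obtain x where x: "x \<in> cube" and J: "J = (?F ^^ Suc t) ` itinerary_cell 0 K s T (Suc (Suc t)) x"
    using Qpart_eq_image_itinerary_cell[OF assms] .
  have "(?F ^^ Suc t) z = regulation K (itinerary 0 K s T x t)"
    if "z \<in> itinerary_cell 0 K s T (Suc (Suc t)) x" for z
  proof -
    have "itinerary 0 K s T z t = itinerary 0 K s T x t"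
      using that by (simp add: itinerary_cell_def)
    then show ?thesis
      by (simp add: dtrn_map_eq_regulation itinerary_def)
  qed
  moreover have "x \<in> itinerary_cell 0 K s T (Suc (Suc t)) x"
    using itinerary_cell_self[OF x] .
  ultimately have "J = (\<lambda>_. regulation K (itinerary 0 K s T x t)) ` itinerary_cell 0 K s T (Suc (Suc t)) x"
    unfolding J by (intro image_cong) simp_all
  then have "J = {regulation K (itinerary 0 K s T x t)}"
    using \<open>x \<in> itinerary_cell 0 K s T (Suc (Suc t)) x\<close> by (simp add: image_constant)
  then show ?thesis
    by (simp add: itinerary_def switch_pattern_in_zero_one_matrices)
qed

lemma spec_cells_finite_card_le:
  fixes K :: "'n::finite \<Rightarrow> 'n \<Rightarrow> real"
  assumes d: "is_dtrn a K s T" and ci: "coordinatewise_injective a K" and hi: "head_independent K U"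
    and "t \<ge> 1"
  shows "finite (spec_cells a K s T (UNIV - U) t S) \<and>
    card (spec_cells a K s T (UNIV - U) t S) \<le> card (zero_one_matrices :: ('n \<Rightarrow> 'n \<Rightarrow> real) set)"
proof -
  let ?cells = "spec_cells a K s T (UNIV - U) t S"
  obtain t' where t: "t = Suc t'"
    using \<open>t \<ge> 1\<close> by (cases t) auto
  have Q: "J \<in> Qpart a K s T (Suc t')" if "J \<in> ?cells" for J
    using that t by (simp add: spec_cells_def)
  show ?thesis
  proof (cases "a = 0 \<and> t' \<noteq> 0")
    case True
    then obtain t'' where "a = 0" "t' = Suc t''"
      using not0_implies_Suc by blast
    then have sub: "?cells \<subseteq> (\<lambda>\<sigma>. {regulation K \<sigma>}) ` zero_one_matrices"
      using Qpart_rate_zero d Q by blast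
    have "card ?cells \<le> card ((\<lambda>\<sigma>. {regulation K \<sigma>}) ` zero_one_matrices)"
      using card_mono[OF finite_imageI[OF finite_zero_one_matrices] sub] .
    also have "\<dots> \<le> card (zero_one_matrices :: ('n \<Rightarrow> 'n \<Rightarrow> real) set)"
      using card_image_le[OF finite_zero_one_matrices] .
    finally show ?thesis
      using finite_subset[OF sub finite_imageI[OF finite_zero_one_matrices]] by blast
  next
    case False
    then have a_t: "a \<noteq> 0 \<or> t' = 0"
      by blast
    show ?thesis
    proof (cases "?cells = {}")
      case False
      then obtain J0 where J0: "J0 \<in> ?cells"
        by blast
      then obtain y0 where "y0 \<in> J0"
        using Qpart_nonempty[OF d Q] by blast
      define rep where "rep J = (SOME y. y \<in> J \<and> (\<forall>w\<in>UNIV - U. y w = y0 w))" for J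
      have rep: "rep J \<in> J \<and> (\<forall>w\<in>UNIV - U. rep J w = y0 w)" if "J \<in> ?cells" for J
      proof -
        have "\<exists>y\<in>J. \<forall>w\<in>UNIV - U. y w = y0 w"
          using spec_cells_meet_fibre[OF d _ _ \<open>y0 \<in> J0\<close>] that J0 unfolding t .
        then have "\<exists>y. y \<in> J \<and> (\<forall>w\<in>UNIV - U. y w = y0 w)"
          by blast
        then show ?thesis
          unfolding rep_def by (rule someI_ex)
      qed
      let ?code = "\<lambda>J. switch_pattern s T (rep J)"
      have inj: "inj_on ?code ?cells"
      proof (rule inj_onI)
        fix J J' assume J: "J \<in> ?cells" and J': "J' \<in> ?cells" and "?code J = ?code J'"
        moreover have "\<forall>w\<in>UNIV - U. rep J w = rep J' w"
          using rep[OF J] rep[OF J'] by simp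
        ultimately show "J = J'"
          using Qpart_eq_if_agree[OF d ci hi a_t Q[OF J] Q[OF J']] rep[OF J] rep[OF J'] by blast
      qed
      have sub: "?code ` ?cells \<subseteq> zero_one_matrices"
        using switch_pattern_in_zero_one_matrices by blast
      show ?thesis
        using finite_imageD[OF finite_subset[OF sub finite_zero_one_matrices] inj]
          card_inj_on_le[OF inj sub finite_zero_one_matrices] by blast
    qed simp
  qed
qed

theorem mainTheorem9:
  fixes a :: real and K :: "'n::finite \<Rightarrow> 'n \<Rightarrow> real"
    and s :: "'n \<Rightarrow> 'n \<Rightarrow> int" and T :: "'n \<Rightarrow> 'n \<Rightarrow> real" and U :: "'n set"
  assumes "is_dtrn a K s T"
    and "coordinatewise_injective a K"
    and "head_independent K U"
  shows "essential a K s T (UNIV - U)"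
  unfolding essential_def using spec_cells_finite_card_le[OF assms] by blast

end
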